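(* For all integers $2\le n\le m$, \[ \gamma_{2t}(K_n\Box K_m)\le\gamma_{2t}(K_n\Box K_{m+1})\le\gamma_{2t}(K_n\Box K_m)+1 \] and \[ \gamma_{2t}(K_n\Box K_m)\le\gamma_{2t}(K_{n+1}\Box K_m)\le\gamma_{2t}(K_n\Box K_m)+2. \]
   Context: For a graph $G=(V,E)$, a set $S\subseteq V$ is a total $2$-dominating set if every vertex of $V$ (including those in $S$) is adjacent to at least $2$ vertices of $S$; $\gamma_{2t}(G)$ is the minimum cardinality of such a set. $G\Box H$ denotes the Cartesian product: vertex set $V(G)\times V(H)$, with $(u_1,v_1)\sim(u_2,v_2)$ iff either $u_1=u_2$ and $v_1\sim v_2$, or $v_1=v_2$ and $u_1\sim u_2$. $K_n$ is the complete graph on $n$ vertices. *)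

theory Defs
  imports Main
begin

text \<open>A graph is given by a vertex set V and a symmetric irreflexive adjacency relation E.\<close>

definition total_2_dom_set :: "'a set \<Rightarrow> ('a \<Rightarrow> 'a \<Rightarrow> bool) \<Rightarrow> 'a set \<Rightarrow> bool" where
  "total_2_dom_set V E S \<longleftrightarrow> S \<subseteq> V \<and> (\<forall>v\<in>V. 2 \<le> card {u\<in>S. E v u})"

definition gamma_2t :: "'a set \<Rightarrow> ('a \<Rightarrow> 'a \<Rightarrow> bool) \<Rightarrow> nat" where
  "gamma_2t V E = Min (card ` {S. total_2_dom_set V E S})"

definition complete_verts :: "nat \<Rightarrow> nat set" where
  "complete_verts n = {..<n}"

definition complete_adj :: "nat \<Rightarrow> nat \<Rightarrow> bool" where
  "complete_adj u v \<longleftrightarrow> u \<noteq> v"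

definition cart_adj :: "('a \<Rightarrow> 'a \<Rightarrow> bool) \<Rightarrow> ('b \<Rightarrow> 'b \<Rightarrow> bool) \<Rightarrow> 'a \<times> 'b \<Rightarrow> 'a \<times> 'b \<Rightarrow> bool" where
  "cart_adj EG EH p q \<longleftrightarrow>
     (fst p = fst q \<and> EH (snd p) (snd q)) \<or> (snd p = snd q \<and> EG (fst p) (fst q))"

definition gamma_2t_KK :: "nat \<Rightarrow> nat \<Rightarrow> nat" where
  "gamma_2t_KK n m = gamma_2t (complete_verts n \<times> complete_verts m) (cart_adj complete_adj complete_adj)"

end

theory Submission
  imports Defs
begin

text \<open>
  For \<open>S \<subseteq> [n] \<times> [m]\<close>, the vertex \<open>(i, j)\<close> of \<open>K\<^sub>n \<box> K\<^sub>m\<close> has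
  \<open>|row S i - {j}| + |col S j - {i}|\<close> neighbours in \<open>S\<close>. Adding a column \<open>k\<close> costs at most
  two cells: one in column \<open>k\<close> for each of two occupied rows. When \<open>n \<le> m\<close> one cell suffices:
  either every row is occupied and some row has two cells, and one new cell in that row works,
  or every column already has two cells, so \<open>|S| \<ge> 2m \<ge> 2n\<close> and two full columns are no
  larger. Deleting a column \<open>a\<close> of minimal weight costs nothing if at least three columns
  remain: each cell \<open>(i, a)\<close> moves within row \<open>i\<close> to an empty cell, unless row \<open>i\<close> is
  already full. Transposition gives the bounds for rows, and \<open>\<gamma>\<^sub>2\<^sub>t(K\<^sub>2 \<box> K\<^sub>m) = 4\<close>
  settles the small cases.
\<close>

lemma ex_other_if_card_ge_2:
  assumes "2 \<le> card A"
  obtains y where "y \<in> A" "y \<noteq> x"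
proof -
  have "\<not> A \<subseteq> {x}" using assms card_mono[of "{x}" A] by auto
  then show ?thesis using that by blast
qed

lemma card_insert_Diff_swap:
  assumes "finite X" "a \<in> X" "c \<notin> X"
  shows "card (insert c (X - {a})) = card X"
  using assms card_Suc_Diff1[OF assms(1,2)] by simp

lemma total_2_dom_set_image_iff:
  assumes f: "bij_betw f V V'" and adj: "\<forall>x\<in>V. \<forall>y\<in>V. E' (f x) (f y) = E x y"
    and S: "S \<subseteq> V"
  shows "total_2_dom_set V' E' (f ` S) \<longleftrightarrow> total_2_dom_set V E S"
proof -
  have inj: "inj_on f V" and img: "f ` V = V'" using f by (auto simp: bij_betw_def)
  have "card {u \<in> f ` S. E' (f v) u} = card {u \<in> S. E v u}" if "v \<in> V" for v
  proof -
    have "{u \<in> f ` S. E' (f v) u} = f ` {u \<in> S. E v u}" using that S adj by auto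
    also have "card \<dots> = card {u \<in> S. E v u}"
      by (rule card_image, rule inj_on_subset[OF inj]) (use S in auto)
    finally show ?thesis .
  qed
  then show ?thesis using S img by (auto simp: total_2_dom_set_def)
qed

lemma gamma_2t_iso:
  assumes f: "bij_betw f V V'" and adj: "\<forall>x\<in>V. \<forall>y\<in>V. E' (f x) (f y) = E x y"
  shows "gamma_2t V' E' = gamma_2t V E"
proof -
  have inj: "inj_on f V" and img: "f ` V = V'" using f by (auto simp: bij_betw_def)
  have "{S'. total_2_dom_set V' E' S'} = (`) f ` {S. total_2_dom_set V E S}"
  proof (intro equalityI subsetI)
    fix S' assume S': "S' \<in> {S'. total_2_dom_set V' E' S'}"
    then have "S' = f ` (V \<inter> f -` S')" using img by (auto simp: total_2_dom_set_def)
    then show "S' \<in> (`) f ` {S. total_2_dom_set V E S}"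
      using S' total_2_dom_set_image_iff[OF f adj, of "V \<inter> f -` S'"] by auto
  next
    fix S' assume "S' \<in> (`) f ` {S. total_2_dom_set V E S}"
    then obtain S where "S' = f ` S" "total_2_dom_set V E S" by auto
    then show "S' \<in> {S'. total_2_dom_set V' E' S'}"
      using total_2_dom_set_image_iff[OF f adj] by (auto simp: total_2_dom_set_def)
  qed
  moreover have "card (f ` S) = card S" if "total_2_dom_set V E S" for S
    using that inj_on_subset[OF inj] card_image by (auto simp: total_2_dom_set_def)
  ultimately have "card ` {S'. total_2_dom_set V' E' S'} = card ` {S. total_2_dom_set V E S}"
    by (simp add: image_image)
  then show ?thesis by (simp add: gamma_2t_def)
qed

lemma finite_total_2_dom_sets: "finite V \<Longrightarrow> finite {S. total_2_dom_set V E S}"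
  by (rule finite_subset[of _ "Pow V"]) (auto simp: total_2_dom_set_def)

lemma gamma_2t_le:
  "finite V \<Longrightarrow> total_2_dom_set V E S \<Longrightarrow> gamma_2t V E \<le> card S"
  unfolding gamma_2t_def by (auto intro: Min_le finite_total_2_dom_sets)

lemma gamma_2t_attained:
  assumes "finite V" "total_2_dom_set V E S"
  shows "\<exists>S. total_2_dom_set V E S \<and> card S = gamma_2t V E"
proof -
  have "gamma_2t V E \<in> card ` {S. total_2_dom_set V E S}"
    unfolding gamma_2t_def using assms by (intro Min_in finite_imageI finite_total_2_dom_sets) auto
  then show ?thesis by auto
qed

lemma gamma_2t_le_add:
  assumes "finite V" "finite V'" "total_2_dom_set V E S\<^sub>0"
    and "\<And>S. total_2_dom_set V E S \<Longrightarrow> \<exists>S'. total_2_dom_set V' E' S' \<and> card S' \<le> card S + c"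
  shows "gamma_2t V' E' \<le> gamma_2t V E + c"
proof -
  obtain S where S: "total_2_dom_set V E S" "card S = gamma_2t V E"
    using gamma_2t_attained[OF assms(1,3)] by blast
  obtain S' where "total_2_dom_set V' E' S'" "card S' \<le> card S + c" using assms(4)[OF S(1)] by blast
  then show ?thesis using gamma_2t_le[OF assms(2)] S(2) by (metis le_trans)
qed

abbreviation rook_adj :: "nat \<times> nat \<Rightarrow> nat \<times> nat \<Rightarrow> bool" where
  "rook_adj \<equiv> cart_adj complete_adj complete_adj"

lemma rook_adj_iff: "rook_adj (i, j) (i', j') \<longleftrightarrow> (i = i' \<and> j \<noteq> j') \<or> (j = j' \<and> i \<noteq> i')"
  by (auto simp: cart_adj_def complete_adj_def)

lemma gamma_2t_KK_eq: "gamma_2t_KK p q = gamma_2t ({..<p} \<times> {..<q}) rook_adj"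
  by (simp add: gamma_2t_KK_def complete_verts_def)

lemma gamma_2t_rook_eq_gamma_2t_KK:
  assumes "finite P" "finite Q"
  shows "gamma_2t (P \<times> Q) rook_adj = gamma_2t_KK (card P) (card Q)"
proof -
  obtain g where g: "bij_betw g P {0..<card P}" using ex_bij_betw_finite_nat[OF assms(1)] ..
  obtain h where h: "bij_betw h Q {0..<card Q}" using ex_bij_betw_finite_nat[OF assms(2)] ..
  have "gamma_2t ({0..<card P} \<times> {0..<card Q}) rook_adj = gamma_2t (P \<times> Q) rook_adj"
  proof (rule gamma_2t_iso)
    show "bij_betw (map_prod g h) (P \<times> Q) ({0..<card P} \<times> {0..<card Q})"
      using g h by (rule bij_betw_map_prod)
    show "\<forall>x\<in>P \<times> Q. \<forall>y\<in>P \<times> Q. rook_adj (map_prod g h x) (map_prod g h y) = rook_adj x y"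
      using g h by (auto simp: bij_betw_def rook_adj_iff inj_on_eq_iff)
  qed
  then show ?thesis by (simp add: gamma_2t_KK_eq atLeast0LessThan)
qed

lemma gamma_2t_KK_commute: "gamma_2t_KK q p = gamma_2t_KK p q"
proof -
  have "gamma_2t ({..<q} \<times> {..<p}) rook_adj = gamma_2t ({..<p} \<times> {..<q}) rook_adj"
    by (rule gamma_2t_iso[where f = prod.swap]) (auto simp: cart_adj_def bij_betw_def)
  then show ?thesis by (simp add: gamma_2t_KK_eq)
qed

definition row :: "(nat \<times> nat) set \<Rightarrow> nat \<Rightarrow> nat set" where
  "row S i = {j. (i, j) \<in> S}"

definition col :: "(nat \<times> nat) set \<Rightarrow> nat \<Rightarrow> nat set" where
  "col S j = {i. (i, j) \<in> S}"

lemma finite_row: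
  assumes "finite S"
  shows "finite (row S i)"
proof -
  have "row S i \<subseteq> snd ` S" by (auto simp: row_def intro: rev_image_eqI)
  then show ?thesis using assms finite_subset by blast
qed

lemma finite_col:
  assumes "finite S"
  shows "finite (col S j)"
proof -
  have "col S j \<subseteq> fst ` S" by (auto simp: col_def intro: rev_image_eqI)
  then show ?thesis using assms finite_subset by blast
qed

lemma card_eq_sum_card_col:
  assumes "finite S" "S \<subseteq> P \<times> Q" "finite Q"
  shows "card S = (\<Sum>j\<in>Q. card (col S j))"
proof -
  have "card S = card (prod.swap ` S)" by (simp add: card_image)
  also have "prod.swap ` S = Sigma Q (col S)"
  proof (intro equalityI subsetI)
    fix x assume "x \<in> prod.swap ` S"
    then obtain i j where "(i, j) \<in> S" "x = (j, i)" by auto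
    then show "x \<in> Sigma Q (col S)" using assms(2) by (auto simp: col_def)
  next
    fix x assume "x \<in> Sigma Q (col S)"
    then show "x \<in> prod.swap ` S" by (cases x) (auto simp: col_def intro: rev_image_eqI)
  qed
  also have "card (Sigma Q (col S)) = (\<Sum>j\<in>Q. card (col S j))"
    using assms(1,3) finite_col by (intro card_SigmaI) auto
  finally show ?thesis .
qed

lemma card_rook_neighbours:
  assumes "finite S"
  shows "card {u \<in> S. rook_adj (i, j) u} = card (row S i - {j}) + card (col S j - {i})"
proof -
  have "{u \<in> S. rook_adj (i, j) u} = Pair i ` (row S i - {j}) \<union> (\<lambda>i'. (i', j)) ` (col S j - {i})"
    by (auto simp: cart_adj_def complete_adj_def row_def col_def)
  also have "card \<dots> = card (Pair i ` (row S i - {j})) + card ((\<lambda>i'. (i', j)) ` (col S j - {i}))"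
    using finite_row[OF assms] finite_col[OF assms] by (intro card_Un_disjoint) auto
  also have "\<dots> = card (row S i - {j}) + card (col S j - {i})"
    by (simp add: card_image inj_on_def)
  finally show ?thesis .
qed

lemma total_2_dom_set_rook_iff:
  assumes "finite P" "finite Q"
  shows "total_2_dom_set (P \<times> Q) rook_adj S \<longleftrightarrow>
    S \<subseteq> P \<times> Q \<and> (\<forall>i\<in>P. \<forall>j\<in>Q. 2 \<le> card (row S i - {j}) + card (col S j - {i}))"
proof (cases "S \<subseteq> P \<times> Q")
  case True
  then have "finite S" using assms finite_subset by blast
  then show ?thesis using True card_rook_neighbours by (auto simp: total_2_dom_set_def)
qed (auto simp: total_2_dom_set_def)

lemma total_2_dom_set_two_columns:
  assumes "finite P" "finite Q" "2 \<le> card P" "j\<^sub>1 \<in> Q" "j\<^sub>2 \<in> Q" "j\<^sub>1 \<noteq> j\<^sub>2"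
  shows "total_2_dom_set (P \<times> Q) rook_adj (P \<times> {j\<^sub>1, j\<^sub>2})"
proof -
  have "2 \<le> card (row (P \<times> {j\<^sub>1, j\<^sub>2}) i - {j}) + card (col (P \<times> {j\<^sub>1, j\<^sub>2}) j - {i})"
    if "i \<in> P" "j \<in> Q" for i j
  proof (cases "j \<in> {j\<^sub>1, j\<^sub>2}")
    case True
    have "row (P \<times> {j\<^sub>1, j\<^sub>2}) i = {j\<^sub>1, j\<^sub>2}" using that by (auto simp: row_def)
    then have "card (row (P \<times> {j\<^sub>1, j\<^sub>2}) i - {j}) = 1"
      using True assms(6) by (auto simp: insert_Diff_if)
    moreover have "card (col (P \<times> {j\<^sub>1, j\<^sub>2}) j - {i}) = card P - 1"
      using True that assms(1) by (auto simp: col_def)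
    ultimately show ?thesis using assms(3) by simp
  next
    case False
    then have "row (P \<times> {j\<^sub>1, j\<^sub>2}) i - {j} = {j\<^sub>1, j\<^sub>2}" using that by (auto simp: row_def)
    then show ?thesis using assms(6) by simp
  qed
  then show ?thesis using assms by (subst total_2_dom_set_rook_iff) auto
qed

lemma total_2_dom_set_card_le_3:
  assumes irrefl: "\<And>v. \<not> E v v" and "V \<noteq> {}" and S: "total_2_dom_set V E S"
    and "finite S" "card S \<le> 3"
  shows "card S = 3" and "\<forall>s\<in>S. \<forall>t\<in>S. s \<noteq> t \<longrightarrow> E s t"
proof -
  have sub: "S \<subseteq> V" and dom: "\<And>v. v \<in> V \<Longrightarrow> 2 \<le> card {u \<in> S. E v u}"
    using S by (auto simp: total_2_dom_set_def)
  have neighbours: "{u \<in> S. E s u} = S - {s}" if "s \<in> S" for s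
  proof (rule card_subset_eq)
    show N: "{u \<in> S. E s u} \<subseteq> S - {s}" using irrefl by auto
    have "card (S - {s}) \<le> 2" using assms(4,5) that by (simp add: card_Diff_singleton)
    moreover have "2 \<le> card {u \<in> S. E s u}" using dom that sub by blast
    moreover have "card {u \<in> S. E s u} \<le> card (S - {s})" using N assms(4) by (simp add: card_mono)
    ultimately show "card {u \<in> S. E s u} = card (S - {s})" by linarith
  qed (use assms(4) in simp)
  then show "\<forall>s\<in>S. \<forall>t\<in>S. s \<noteq> t \<longrightarrow> E s t" by blast
  obtain v where "v \<in> V" using assms(2) by blast
  then have "S \<noteq> {}" using dom[of v] by (intro notI) simp
  then obtain s where "s \<in> S" by blast
  then have "2 \<le> card (S - {s})" using neighbours[of s] dom[of s] sub by auto
  then show "card S = 3" using assms(4,5) \<open>s \<in> S\<close> by (simp add: card_Diff_singleton)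
qed

lemma total_2_dom_set_card_ge_4:
  assumes "finite P" "finite Q" "2 \<le> card P" "2 \<le> card Q" "total_2_dom_set (P \<times> Q) rook_adj S"
  shows "4 \<le> card S"
proof (rule ccontr)
  assume "\<not> 4 \<le> card S"
  have sub: "S \<subseteq> P \<times> Q" and dom: "\<And>v. v \<in> P \<times> Q \<Longrightarrow> 2 \<le> card {u \<in> S. rook_adj v u}"
    using assms(5) by (auto simp: total_2_dom_set_def)
  have fin: "finite S" using sub assms(1,2) finite_subset by blast
  have "P \<noteq> {}" "Q \<noteq> {}" using assms(3,4) by (auto intro!: notI)
  then have "P \<times> Q \<noteq> {}" by simp
  moreover have "\<And>v. \<not> rook_adj v v" by (simp add: cart_adj_def complete_adj_def)
  moreover have "card S \<le> 3" using \<open>\<not> 4 \<le> card S\<close> by simp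
  ultimately have "card S = 3" and clique: "\<forall>s\<in>S. \<forall>t\<in>S. s \<noteq> t \<longrightarrow> rook_adj s t"
    using total_2_dom_set_card_le_3[OF _ _ assms(5) fin] by blast+
  then obtain a b c where S: "S = {a, b, c}" and "a \<noteq> b" "b \<noteq> c" "a \<noteq> c"
    by (auto simp: card_3_iff)
  then have "rook_adj a b" "rook_adj a c" "rook_adj b c" using clique by blast+
  then have line: "(fst b = fst a \<and> fst c = fst a) \<or> (snd b = snd a \<and> snd c = snd a)"
    using \<open>a \<noteq> b\<close> \<open>b \<noteq> c\<close> \<open>a \<noteq> c\<close> by (cases a; cases b; cases c) (auto simp: rook_adj_iff)
  have "a \<in> P \<times> Q" using S sub by blast
  have not_only_a: "\<not> {u \<in> S. rook_adj v u} \<subseteq> {a}" if "v \<in> P \<times> Q" for v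
  proof
    assume "{u \<in> S. rook_adj v u} \<subseteq> {a}"
    then have "card {u \<in> S. rook_adj v u} \<le> 1" using card_mono[of "{a}"] by simp
    then show False using dom[OF that] by simp
  qed
  show False
    using line
  proof
    assume row: "fst b = fst a \<and> fst c = fst a"
    obtain i' where "i' \<in> P" "i' \<noteq> fst a" using ex_other_if_card_ge_2[OF assms(3)] .
    then have "{u \<in> S. rook_adj (i', snd a) u} \<subseteq> {a}"
      using row S by (auto simp: cart_adj_def complete_adj_def prod_eq_iff)
    then show False using not_only_a[of "(i', snd a)"] \<open>i' \<in> P\<close> \<open>a \<in> P \<times> Q\<close> by (simp add: mem_Times_iff)
  next
    assume col: "snd b = snd a \<and> snd c = snd a"
    obtain j' where "j' \<in> Q" "j' \<noteq> snd a" using ex_other_if_card_ge_2[OF assms(4)] .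
    then have "{u \<in> S. rook_adj (fst a, j') u} \<subseteq> {a}"
      using col S by (auto simp: cart_adj_def complete_adj_def prod_eq_iff)
    then show False using not_only_a[of "(fst a, j')"] \<open>j' \<in> Q\<close> \<open>a \<in> P \<times> Q\<close> by (simp add: mem_Times_iff)
  qed
qed

lemma total_2_dom_set_add_column:
  assumes "finite P" "finite Q" "k \<notin> Q" "total_2_dom_set (P \<times> Q) rook_adj S" "T \<subseteq> P"
    and new: "\<forall>i\<in>P. 2 \<le> card (row S i) + card (T - {i})"
  shows "total_2_dom_set (P \<times> insert k Q) rook_adj (S \<union> T \<times> {k})"
proof -
  let ?S' = "S \<union> T \<times> {k}"
  have sub: "S \<subseteq> P \<times> Q" using assms(4) by (simp add: total_2_dom_set_def)
  have fin: "finite ?S'" using sub assms(1,2,5) finite_subset by (metis finite_Un finite_SigmaI finite.intros)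
  have "2 \<le> card {u \<in> ?S'. rook_adj v u}" if v: "v \<in> P \<times> insert k Q" for v
  proof (cases "snd v \<in> Q")
    case True
    then have "2 \<le> card {u \<in> S. rook_adj v u}" using assms(4) v by (auto simp: total_2_dom_set_def)
    also have "\<dots> \<le> card {u \<in> ?S'. rook_adj v u}" using fin by (intro card_mono) auto
    finally show ?thesis .
  next
    case False
    then obtain i where i: "i \<in> P" and "v = (i, k)" using v by auto
    moreover have "row ?S' i - {k} = row S i" using sub assms(3) by (auto simp: row_def)
    moreover have "col ?S' k - {i} = T - {i}" using sub assms(3) by (auto simp: col_def)
    ultimately show ?thesis using new card_rook_neighbours[OF fin] by simp
  qed
  moreover have "?S' \<subseteq> P \<times> insert k Q" using sub assms(5) by auto
  ultimately show ?thesis by (simp add: total_2_dom_set_def)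
qed

lemma card_add_column_le: "card (S \<union> T \<times> {k}) \<le> card S + card T"
  using card_Un_le[of S "T \<times> {k}"] by (simp add: card_cartesian_product)

lemma two_nonempty_rows:
  assumes "finite P" "finite Q" "2 \<le> card P" "j \<in> Q" "total_2_dom_set (P \<times> Q) rook_adj S"
  obtains r\<^sub>1 r\<^sub>2 where "r\<^sub>1 \<in> P" "r\<^sub>2 \<in> P" "r\<^sub>1 \<noteq> r\<^sub>2" "row S r\<^sub>1 \<noteq> {}" "row S r\<^sub>2 \<noteq> {}"
proof -
  have sub: "S \<subseteq> P \<times> Q" and dom: "\<forall>i\<in>P. \<forall>j\<in>Q. 2 \<le> card (row S i - {j}) + card (col S j - {i})"
    using assms(5) total_2_dom_set_rook_iff[OF assms(1,2)] by auto
  have "\<exists>r\<^sub>1\<in>P. \<exists>r\<^sub>2\<in>P. r\<^sub>1 \<noteq> r\<^sub>2 \<and> row S r\<^sub>1 \<noteq> {} \<and> row S r\<^sub>2 \<noteq> {}"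
  proof (rule ccontr)
    assume no_two: "\<not> ?thesis"
    obtain r where r: "\<forall>i\<in>P. row S i \<noteq> {} \<longrightarrow> i = r"
    proof (cases "\<exists>i\<in>P. row S i \<noteq> {}")
      case True
      then obtain r where "r \<in> P" "row S r \<noteq> {}" by blast
      then show ?thesis using that no_two by blast
    qed (use that in blast)
    obtain i' where "i' \<in> P" "i' \<noteq> r" using ex_other_if_card_ge_2[OF assms(3)] .
    then have "row S i' = {}" using r by blast
    moreover have "col S j - {i'} \<subseteq> {r}" using r sub by (auto simp: row_def col_def)
    then have "card (col S j - {i'}) \<le> 1" using card_mono[of "{r}"] by simp
    ultimately show False using dom \<open>i' \<in> P\<close> assms(4) by fastforce
  qed
  then show ?thesis using that by blast
qed

lemma col_card_ge_2:
  assumes "finite P" "finite Q" "total_2_dom_set (P \<times> Q) rook_adj S" "j \<in> Q"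
    and "i\<^sub>0 \<in> P" and sparse: "row S i\<^sub>0 = {} \<or> (\<forall>i\<in>P. card (row S i) \<le> 1)"
  shows "2 \<le> card (col S j)"
proof -
  have sub: "S \<subseteq> P \<times> Q" and dom: "\<forall>i\<in>P. \<forall>j\<in>Q. 2 \<le> card (row S i - {j}) + card (col S j - {i})"
    using assms(3) total_2_dom_set_rook_iff[OF assms(1,2)] by auto
  have fin: "finite S" using sub assms(1,2) finite_subset by blast
  obtain i where i: "i \<in> P" "row S i - {j} = {}"
  proof (cases "row S i\<^sub>0 - {j} = {}")
    case False
    then have rows: "\<forall>i\<in>P. card (row S i) \<le> 1" using sparse by blast
    then have "card (row S i\<^sub>0 - {j}) \<le> 1"
      using \<open>i\<^sub>0 \<in> P\<close> card_Diff1_le[of "row S i\<^sub>0" j] by fastforce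
    moreover have "2 \<le> card (row S i\<^sub>0 - {j}) + card (col S j - {i\<^sub>0})"
      using dom \<open>i\<^sub>0 \<in> P\<close> assms(4) by blast
    ultimately have "col S j - {i\<^sub>0} \<noteq> {}" by (intro notI) simp
    then obtain i\<^sub>1 where "i\<^sub>1 \<in> col S j" by blast
    then have "i\<^sub>1 \<in> P" "j \<in> row S i\<^sub>1" using sub by (auto simp: col_def row_def)
    then have "row S i\<^sub>1 - {j} = {}"
      using rows finite_row[OF fin, of i\<^sub>1] card_le_Suc0_iff_eq[of "row S i\<^sub>1"] by auto
    then show ?thesis using that \<open>i\<^sub>1 \<in> P\<close> by blast
  qed (use that \<open>i\<^sub>0 \<in> P\<close> in blast)
  then have "2 \<le> card (col S j - {i})" using dom assms(4) by (metis card.empty add_0)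
  then show ?thesis using card_Diff1_le[of "col S j" i] by linarith
qed

lemma total_2_dom_set_add_column_2:
  assumes "finite P" "finite Q" "2 \<le> card P" "j \<in> Q" "k \<notin> Q"
    and S: "total_2_dom_set (P \<times> Q) rook_adj S"
  shows "\<exists>S'. total_2_dom_set (P \<times> insert k Q) rook_adj S' \<and> card S' \<le> card S + 2"
proof -
  have fin: "finite S" using S assms(1,2) finite_subset[of S "P \<times> Q"] by (simp add: total_2_dom_set_def)
  obtain r\<^sub>1 r\<^sub>2 where r: "r\<^sub>1 \<in> P" "r\<^sub>2 \<in> P" "r\<^sub>1 \<noteq> r\<^sub>2" "row S r\<^sub>1 \<noteq> {}" "row S r\<^sub>2 \<noteq> {}"
    using two_nonempty_rows[OF assms(1-4) S] .
  have "2 \<le> card (row S i) + card ({r\<^sub>1, r\<^sub>2} - {i})" if "i \<in> P" for i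
  proof (cases "i \<in> {r\<^sub>1, r\<^sub>2}")
    case True
    then have "row S i \<noteq> {}" using r by blast
    then have "1 \<le> card (row S i)" using finite_row[OF fin] by (simp add: Suc_le_eq card_gt_0_iff)
    moreover have "card ({r\<^sub>1, r\<^sub>2} - {i}) = 1" using True r(3) by auto
    ultimately show ?thesis by linarith
  next
    case False
    then show ?thesis using r(3) by simp
  qed
  then have "total_2_dom_set (P \<times> insert k Q) rook_adj (S \<union> {r\<^sub>1, r\<^sub>2} \<times> {k})"
    using r by (intro total_2_dom_set_add_column[OF assms(1,2,5) S]) auto
  moreover have "card (S \<union> {r\<^sub>1, r\<^sub>2} \<times> {k}) \<le> card S + 2"
    using card_add_column_le[of S "{r\<^sub>1, r\<^sub>2}" k] r(3) by simp
  ultimately show ?thesis by blast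
qed

lemma total_2_dom_set_add_column_1:
  assumes "finite P" "finite Q" "2 \<le> card P" "card P \<le> card Q" "k \<notin> Q"
    and S: "total_2_dom_set (P \<times> Q) rook_adj S"
  shows "\<exists>S'. total_2_dom_set (P \<times> insert k Q) rook_adj S' \<and> card S' \<le> card S + 1"
proof -
  have sub: "S \<subseteq> P \<times> Q" using S by (simp add: total_2_dom_set_def)
  have fin: "finite S" using sub assms(1,2) finite_subset by blast
  obtain i\<^sub>0 j where "i\<^sub>0 \<in> P" "j \<in> Q" using assms(3,4) by fastforce
  show ?thesis
  proof (cases "\<exists>i\<in>P. row S i = {} \<or> (\<forall>i'\<in>P. card (row S i') \<le> 1)")
    case True
    then have "\<forall>j\<in>Q. 2 \<le> card (col S j)" using col_card_ge_2[OF assms(1,2) S] by blast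
    then have "2 * card Q \<le> card S"
      using card_eq_sum_card_col[OF fin sub assms(2)] sum_mono[of Q "\<lambda>_. 2" "\<lambda>j. card (col S j)"]
      by simp
    moreover have "total_2_dom_set (P \<times> insert k Q) rook_adj (P \<times> {k, j})"
      using \<open>j \<in> Q\<close> assms by (intro total_2_dom_set_two_columns) auto
    moreover have "card (P \<times> {k, j}) = 2 * card P"
      using \<open>j \<in> Q\<close> assms(5) by (cases "k = j") (auto simp: card_cartesian_product)
    ultimately show ?thesis using assms(4) by (intro exI[of _ "P \<times> {k, j}"]) auto
  next
    case False
    then have nonempty: "\<forall>i\<in>P. row S i \<noteq> {}" and "\<exists>r\<in>P. 1 < card (row S r)"
      using \<open>i\<^sub>0 \<in> P\<close> by (auto simp: not_le)
    then obtain r where r: "r \<in> P" "1 < card (row S r)" by blast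
    have "2 \<le> card (row S i) + card ({r} - {i})" if "i \<in> P" for i
    proof (cases "i = r")
      case False
      have "1 \<le> card (row S i)"
        using nonempty that finite_row[OF fin] by (simp add: Suc_le_eq card_gt_0_iff)
      then show ?thesis using False by simp
    qed (use r in simp)
    then have "total_2_dom_set (P \<times> insert k Q) rook_adj (S \<union> {r} \<times> {k})"
      using r by (intro total_2_dom_set_add_column[OF assms(1,2,5) S]) auto
    moreover have "card (S \<union> {r} \<times> {k}) \<le> card S + 1"
      using card_add_column_le[of S "{r}" k] by simp
    ultimately show ?thesis by blast
  qed
qed

lemma total_2_dom_set_delete_column:
  assumes "finite P" "finite Q" "a \<in> Q" "3 \<le> card (Q - {a})"
    and S: "total_2_dom_set (P \<times> Q) rook_adj S"
    and min: "\<forall>j\<in>Q. card (col S a) \<le> card (col S j)"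
    and "A \<subseteq> col S a" and full: "\<forall>i\<in>col S a - A. Q - {a} \<subseteq> row S i"
    and g: "\<forall>i\<in>A. g i \<in> Q - {a} - row S i"
  shows "total_2_dom_set (P \<times> (Q - {a})) rook_adj ({x \<in> S. snd x \<noteq> a} \<union> (\<lambda>i. (i, g i)) ` A)"
    (is "total_2_dom_set _ _ ?S'")
proof -
  have sub: "S \<subseteq> P \<times> Q" and dom: "\<forall>i\<in>P. \<forall>j\<in>Q. 2 \<le> card (row S i - {j}) + card (col S j - {i})"
    using S total_2_dom_set_rook_iff[OF assms(1,2)] by auto
  have fin: "finite S" using sub assms(1,2) finite_subset by blast
  have sub': "?S' \<subseteq> P \<times> (Q - {a})"
    using sub g \<open>A \<subseteq> col S a\<close> by (auto simp: col_def subset_eq mem_Times_iff) (metis fst_conv)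
  then have fin': "finite ?S'" using assms(1,2) finite_subset by blast
  have "2 \<le> card (row ?S' i - {j}) + card (col ?S' j - {i})" if i: "i \<in> P" and j: "j \<in> Q - {a}" for i j
  proof -
    have row_sub: "row S i - {a} \<subseteq> row ?S' i" by (auto simp: row_def)
    have dom_ij: "2 \<le> card (row S i - {j}) + card (col S j - {i})" using dom i j by blast
    have row_le: "card (R - {j}) \<le> card (row ?S' i - {j})" if "R \<subseteq> row ?S' i" for R
      using that by (intro card_mono[OF finite_Diff[OF finite_row[OF fin']]]) auto
    have col_le: "card (col S j - {i}) \<le> card (col ?S' j - {i})"
      using j by (intro card_mono[OF finite_Diff[OF finite_col[OF fin']]]) (auto simp: col_def)
    consider "i \<notin> col S a" | "i \<in> col S a - A" | "i \<in> A" "j \<noteq> g i" | "i \<in> A" "j = g i"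
      using \<open>A \<subseteq> col S a\<close> by blast
    then show ?thesis
    proof cases
      case 1
      then have "row S i \<subseteq> row ?S' i" by (auto simp: row_def col_def)
      then show ?thesis using dom_ij row_le[of "row S i"] col_le by linarith
    next
      case 2
      then have "Q - {a} \<subseteq> row ?S' i" using full row_sub by blast
      moreover have "card (Q - {a} - {j}) = card (Q - {a}) - 1" using j by simp
      ultimately show ?thesis using row_le[of "Q - {a}"] assms(4) by linarith
    next
      case 3
      have "g i \<in> row ?S' i" using 3 by (auto simp: row_def)
      then have R: "insert (g i) (row S i - {a}) \<subseteq> row ?S' i" using row_sub by blast
      have "insert (g i) (row S i - {a}) - {j} = insert (g i) (row S i - {j} - {a})" using 3 by auto
      also have "card \<dots> = card (row S i - {j})"
        using 3 g \<open>A \<subseteq> col S a\<close> j finite_row[OF fin]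
        by (intro card_insert_Diff_swap) (auto simp: row_def col_def)
      finally show ?thesis using row_le[OF R] dom_ij col_le by linarith
    next
      case 4
      \<comment> \<open>\<open>(i, a)\<close> moved to \<open>(i, j)\<close>: column \<open>j\<close> is at least as heavy as column \<open>a\<close>\<close>
      then have "j \<notin> row S i" using g by blast
      have "2 \<le> card (row S i - {a}) + card (col S a - {i})" using dom i assms(3) by blast
      moreover have "card (row S i - {a}) \<le> card (row ?S' i - {j})"
        using row_le[OF row_sub] \<open>j \<notin> row S i\<close> by (simp add: Diff_insert_absorb insert_Diff_if)
      moreover have "card (col S j) \<le> card (col ?S' j - {i})"
        using col_le \<open>j \<notin> row S i\<close> by (simp add: row_def col_def)
      moreover have "card (col S a - {i}) \<le> card (col S j)"
        using min j card_Diff1_le[of "col S a" i] by fastforce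
      ultimately show ?thesis by linarith
    qed
  qed
  then show ?thesis using sub' assms(1,2) by (subst total_2_dom_set_rook_iff) auto
qed

lemma total_2_dom_set_delete_min_column:
  assumes "finite P" "finite Q" "a \<in> Q" "3 \<le> card (Q - {a})"
    and S: "total_2_dom_set (P \<times> Q) rook_adj S"
    and min: "\<forall>j\<in>Q. card (col S a) \<le> card (col S j)"
  shows "\<exists>S'. total_2_dom_set (P \<times> (Q - {a})) rook_adj S' \<and> card S' \<le> card S"
proof -
  define A where "A = {i \<in> col S a. \<not> Q - {a} \<subseteq> row S i}"
  have "\<forall>i\<in>A. \<exists>c. c \<in> Q - {a} - row S i" unfolding A_def by blast
  then have "\<exists>g. \<forall>i\<in>A. g i \<in> Q - {a} - row S i" by (rule bchoice)
  then obtain g where g: "\<forall>i\<in>A. g i \<in> Q - {a} - row S i" ..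
  let ?S' = "{x \<in> S. snd x \<noteq> a} \<union> (\<lambda>i. (i, g i)) ` A"
  have fin: "finite S" using S assms(1,2) finite_subset[of S "P \<times> Q"] by (simp add: total_2_dom_set_def)
  have "total_2_dom_set (P \<times> (Q - {a})) rook_adj ?S'"
    by (rule total_2_dom_set_delete_column[OF assms _ _ g]) (simp_all add: A_def)
  moreover have "card ?S' \<le> card S"
  proof -
    have "A \<subseteq> col S a" unfolding A_def by blast
    then have "finite A" using finite_col[OF fin] by (rule finite_subset)
    have "card ?S' \<le> card {x \<in> S. snd x \<noteq> a} + card ((\<lambda>i. (i, g i)) ` A)" by (rule card_Un_le)
    also have "\<dots> \<le> card {x \<in> S. snd x \<noteq> a} + card A"
      using card_image_le[OF \<open>finite A\<close>, of "\<lambda>i. (i, g i)"] by simp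
    also have "\<dots> \<le> card {x \<in> S. snd x \<noteq> a} + card ((\<lambda>i. (i, a)) ` col S a)"
      using card_mono[OF finite_col[OF fin] \<open>A \<subseteq> col S a\<close>] by (simp add: card_image inj_on_def)
    also have "\<dots> = card ({x \<in> S. snd x \<noteq> a} \<union> (\<lambda>i. (i, a)) ` col S a)"
      using fin finite_col[OF fin] by (intro card_Un_disjoint[symmetric]) auto
    also have "{x \<in> S. snd x \<noteq> a} \<union> (\<lambda>i. (i, a)) ` col S a = S"
    proof (intro equalityI subsetI)
      fix x assume "x \<in> S"
      then show "x \<in> {x \<in> S. snd x \<noteq> a} \<union> (\<lambda>i. (i, a)) ` col S a"
        by (cases x) (auto simp: col_def image_iff)
    qed (auto simp: col_def)
    finally show ?thesis .
  qed
  ultimately show ?thesis by blast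
qed

lemma total_2_dom_set_first_two_columns:
  "2 \<le> p \<Longrightarrow> 2 \<le> q \<Longrightarrow> total_2_dom_set ({..<p} \<times> {..<q}) rook_adj ({..<p} \<times> {0, 1})"
  by (rule total_2_dom_set_two_columns) auto

lemma gamma_2t_KK_le_twice:
  assumes "2 \<le> p" "2 \<le> q"
  shows "gamma_2t_KK p q \<le> 2 * p"
  using gamma_2t_le[OF _ total_2_dom_set_first_two_columns[OF assms]]
  by (simp add: gamma_2t_KK_eq card_cartesian_product)

lemma gamma_2t_KK_ge_4:
  assumes "2 \<le> p" "2 \<le> q"
  shows "4 \<le> gamma_2t_KK p q"
proof -
  obtain S where S: "total_2_dom_set ({..<p} \<times> {..<q}) rook_adj S" "card S = gamma_2t_KK p q"
    using gamma_2t_attained[OF _ total_2_dom_set_first_two_columns[OF assms]]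
    by (auto simp: gamma_2t_KK_eq)
  then show ?thesis using total_2_dom_set_card_ge_4[of "{..<p}" "{..<q}" S] assms by simp
qed

lemma gamma_2t_KK_two: "2 \<le> q \<Longrightarrow> gamma_2t_KK 2 q = 4"
  using gamma_2t_KK_le_twice[of 2 q] gamma_2t_KK_ge_4[of 2 q] by simp

lemma gamma_2t_KK_Suc_right_le_add_1:
  assumes "2 \<le> p" "p \<le> q"
  shows "gamma_2t_KK p (Suc q) \<le> gamma_2t_KK p q + 1"
  unfolding gamma_2t_KK_eq lessThan_Suc
  using assms total_2_dom_set_add_column_1[of "{..<p}" "{..<q}" q]
  by (intro gamma_2t_le_add[OF _ _ total_2_dom_set_first_two_columns]) auto

lemma gamma_2t_KK_Suc_right_le_add_2:
  assumes "2 \<le> p" "2 \<le> q"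
  shows "gamma_2t_KK p (Suc q) \<le> gamma_2t_KK p q + 2"
  unfolding gamma_2t_KK_eq lessThan_Suc
  using assms total_2_dom_set_add_column_2[of "{..<p}" "{..<q}" 0 q]
  by (intro gamma_2t_le_add[OF _ _ total_2_dom_set_first_two_columns]) auto

lemma gamma_2t_KK_mono_right:
  assumes "2 \<le> p" "2 \<le> q"
  shows "gamma_2t_KK p q \<le> gamma_2t_KK p (Suc q)"
proof (cases "q = 2")
  case True
  then show ?thesis
    using gamma_2t_KK_commute[of p 2] gamma_2t_KK_two[OF assms(1)] gamma_2t_KK_ge_4[OF assms(1)] by simp
next
  case False
  let ?Q = "{..<Suc q}"
  obtain S where S: "total_2_dom_set ({..<p} \<times> ?Q) rook_adj S" "card S = gamma_2t_KK p (Suc q)"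
    using gamma_2t_attained[OF _ total_2_dom_set_first_two_columns[of p "Suc q"]] assms
    by (auto simp: gamma_2t_KK_eq)
  obtain a where a: "a \<in> ?Q" "\<forall>j\<in>?Q. card (col S a) \<le> card (col S j)"
    using ex_has_least_nat[of "\<lambda>j. j \<in> ?Q" 0 "\<lambda>j. card (col S j)"] by auto
  obtain S' where S': "total_2_dom_set ({..<p} \<times> (?Q - {a})) rook_adj S'" "card S' \<le> card S"
    using total_2_dom_set_delete_min_column[OF _ _ a(1) _ S(1) a(2)] a(1) assms False by auto
  have "gamma_2t_KK p q = gamma_2t ({..<p} \<times> (?Q - {a})) rook_adj"
    using gamma_2t_rook_eq_gamma_2t_KK[of "{..<p}" "?Q - {a}"] a(1) by simp
  also have "\<dots> \<le> card S'" using S'(1) by (rule gamma_2t_le[rotated]) simp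
  finally show ?thesis using S' S(2) by simp
qed

theorem lemma5:
  fixes n m :: nat
  assumes "2 \<le> n" and "n \<le> m"
  shows "gamma_2t_KK n m \<le> gamma_2t_KK n (m + 1) \<and> gamma_2t_KK n (m + 1) \<le> gamma_2t_KK n m + 1
       \<and> gamma_2t_KK n m \<le> gamma_2t_KK (n + 1) m \<and> gamma_2t_KK (n + 1) m \<le> gamma_2t_KK n m + 2"
proof (intro conjI)
  have "2 \<le> m" using assms by simp
  show "gamma_2t_KK n m \<le> gamma_2t_KK n (m + 1)"
    using gamma_2t_KK_mono_right[OF assms(1) \<open>2 \<le> m\<close>] by simp
  show "gamma_2t_KK n (m + 1) \<le> gamma_2t_KK n m + 1"
    using gamma_2t_KK_Suc_right_le_add_1[OF assms] by simp
  show "gamma_2t_KK n m \<le> gamma_2t_KK (n + 1) m"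
    using gamma_2t_KK_mono_right[OF \<open>2 \<le> m\<close> assms(1)] gamma_2t_KK_commute by simp
  show "gamma_2t_KK (n + 1) m \<le> gamma_2t_KK n m + 2"
    using gamma_2t_KK_Suc_right_le_add_2[OF \<open>2 \<le> m\<close> assms(1)] gamma_2t_KK_commute by simp
qed

end
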